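(* Let $W$ be a finite Weyl group having a central involution $\tilde w$, and let $\tilde W=W\ltimes Z$ be the corresponding affine Weyl group. Suppose $x$ is an involution in $\tilde W$ of the form $x=(\tilde w,\mathbf u)$ for some $\mathbf u\in Z$, and let $X=x^{\tilde W}$ be the conjugacy class of $x$ in $\tilde W$. Then $\mathcal{C}(\tilde W,X)$ is disconnected.
   Context: $W$ is a finite Weyl group with root system $\Phi$ in a Euclidean space $V$, $\alpha^\vee=2\alpha/\langle\alpha,\alpha\rangle$, and $Z$ is the coroot lattice $L(\Phi^\vee)$ viewed as a group of translations. The affine Weyl group $\tilde W$ consists of pairs $(a,\mathbf u)$, $a\in W$, $\mathbf u\in Z$, with multiplication $(a,\mathbf u)(b,\mathbf v)=(ab,\mathbf u^b+\mathbf v)$, where $\mathbf u\mapsto\mathbf u^b$ is the (right) linear action of $W$ on $V$. $\mathcal{C}(G,X)$ is the graph on a set $X$ of involutions of $G$ with $x,y$ adjacent iff they commute. *)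

theory Defs
  imports "HOL-Analysis.Analysis"
begin

definition coroot :: "'a::euclidean_space \<Rightarrow> 'a" where
  "coroot \<alpha> = (2 / (\<alpha> \<bullet> \<alpha>)) *\<^sub>R \<alpha>"

definition refl :: "'a::euclidean_space \<Rightarrow> 'a \<Rightarrow> 'a" where
  "refl \<alpha> v = v - (v \<bullet> coroot \<alpha>) *\<^sub>R \<alpha>"

definition root_system :: "'a::euclidean_space set \<Rightarrow> bool" where
  "root_system \<Phi> \<longleftrightarrow> finite \<Phi> \<and> 0 \<notin> \<Phi> \<and> span \<Phi> = UNIV
     \<and> (\<forall>\<alpha>\<in>\<Phi>. \<forall>c::real. c *\<^sub>R \<alpha> \<in> \<Phi> \<longrightarrow> c = 1 \<or> c = -1)
     \<and> (\<forall>\<alpha>\<in>\<Phi>. refl \<alpha> ` \<Phi> \<subseteq> \<Phi>)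
     \<and> (\<forall>\<alpha>\<in>\<Phi>. \<forall>\<beta>\<in>\<Phi>. \<beta> \<bullet> coroot \<alpha> \<in> \<int>)"

inductive_set weyl_group :: "'a::euclidean_space set \<Rightarrow> ('a \<Rightarrow> 'a) set" for \<Phi> where
  id: "id \<in> weyl_group \<Phi>"
| step: "w \<in> weyl_group \<Phi> \<Longrightarrow> \<alpha> \<in> \<Phi> \<Longrightarrow> refl \<alpha> \<circ> w \<in> weyl_group \<Phi>"

definition coroot_lattice :: "'a::euclidean_space set \<Rightarrow> 'a set" where
  "coroot_lattice \<Phi> = {\<Sum>\<alpha>\<in>\<Phi>. of_int (c \<alpha>) *\<^sub>R coroot \<alpha> | c. True}"

text \<open>Affine Weyl group W x Z. The product ab in W is "first a, then b" (so that
  u^(ab) = (u^a)^b for the right action u^b = b u), i.e. ab = b o a, and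
  (a,u)(b,v) = (ab, u^b + v).\<close>
definition affine_weyl_group :: "'a::euclidean_space set \<Rightarrow> (('a \<Rightarrow> 'a) \<times> 'a) set" where
  "affine_weyl_group \<Phi> = weyl_group \<Phi> \<times> coroot_lattice \<Phi>"

definition aff_mult :: "(('a \<Rightarrow> 'a) \<times> 'a) \<Rightarrow> (('a \<Rightarrow> 'a) \<times> 'a) \<Rightarrow> (('a \<Rightarrow> 'a) \<times> 'a::real_vector)" where
  "aff_mult x y = (case x of (a, u) \<Rightarrow> case y of (b, v) \<Rightarrow> (b \<circ> a, b u + v))"

definition aff_one :: "('a \<Rightarrow> 'a) \<times> 'a::real_vector" where
  "aff_one = (id, 0)"

definition aff_inv :: "(('a \<Rightarrow> 'a) \<times> 'a) \<Rightarrow> (('a \<Rightarrow> 'a) \<times> 'a::real_vector)" where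
  "aff_inv x = (case x of (a, u) \<Rightarrow> (inv a, - (inv a u)))"

definition aff_conj_class :: "'a::euclidean_space set \<Rightarrow> (('a \<Rightarrow> 'a) \<times> 'a) \<Rightarrow> (('a \<Rightarrow> 'a) \<times> 'a) set" where
  "aff_conj_class \<Phi> x = {aff_mult (aff_mult (aff_inv g) x) g | g. g \<in> affine_weyl_group \<Phi>}"

definition comm_adj :: "('g \<Rightarrow> 'g \<Rightarrow> 'g) \<Rightarrow> 'g set \<Rightarrow> 'g \<Rightarrow> 'g \<Rightarrow> bool" where
  "comm_adj mul X x y \<longleftrightarrow> x \<in> X \<and> y \<in> X \<and> x \<noteq> y \<and> mul x y = mul y x"

definition comm_graph_connected :: "('g \<Rightarrow> 'g \<Rightarrow> 'g) \<Rightarrow> 'g set \<Rightarrow> bool" where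
  "comm_graph_connected mul X \<longleftrightarrow> (\<forall>x\<in>X. \<forall>y\<in>X. (comm_adj mul X)\<^sup>*\<^sup>* x y)"

end

theory Submission
  imports Defs
begin

text \<open>Since \<open>w0\<close> is central in \<open>W\<close>, conjugating \<open>(w0, u)\<close> by \<open>(b, v)\<close> gives
  \<open>(w0, b u + v - w0 v)\<close>: every element of the class has linear part \<open>w0\<close> and
  translation part in the \<open>-1\<close>-eigenspace of \<open>w0\<close>. Two such elements \<open>(w0, p)\<close>,
  \<open>(w0, q)\<close> commute only if \<open>-p + q = -q + p\<close>, i.e. \<open>p = q\<close>, so \<open>(w0, u)\<close> is an
  isolated vertex. The class is not a singleton: as \<open>w0 \<noteq> id\<close> and the roots span,
  \<open>w0\<close> moves some coroot \<open>\<alpha>\<^sup>\<or>\<close>, and conjugating by the translation \<open>\<alpha>\<^sup>\<or>\<close> gives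
  \<open>(w0, u + \<alpha>\<^sup>\<or> - w0 \<alpha>\<^sup>\<or>) \<noteq> (w0, u)\<close>.\<close>

lemma linear_refl: "linear (refl \<alpha>)"
  unfolding refl_def
  by (rule linearI) (simp_all add: algebra_simps)

lemma refl_refl:
  assumes "\<alpha> \<noteq> 0"
  shows "refl \<alpha> (refl \<alpha> v) = v"
proof -
  have "\<alpha> \<bullet> coroot \<alpha> = 2"
    using assms by (simp add: coroot_def)
  then show ?thesis
    unfolding refl_def by (simp add: inner_diff_left algebra_simps)
qed

lemma weyl_group_linear: "w \<in> weyl_group \<Phi> \<Longrightarrow> linear w"
proof (induction rule: weyl_group.induct)
  case id
  show ?case by (rule linear_id)
next
  case (step w \<alpha>)
  then show ?case using linear_refl linear_compose by blast
qed

lemma weyl_group_bij: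
  assumes "0 \<notin> \<Phi>"
  shows "w \<in> weyl_group \<Phi> \<Longrightarrow> bij w"
proof (induction rule: weyl_group.induct)
  case id
  show ?case by (rule bij_id)
next
  case (step w \<alpha>)
  have "\<alpha> \<noteq> 0"
    using assms step.hyps(2) by blast
  then have "refl \<alpha> \<circ> refl \<alpha> = id"
    by (simp add: fun_eq_iff refl_refl)
  then have "bij (refl \<alpha>)"
    using o_bij by blast
  then show ?case using step.IH bij_comp by blast
qed

lemma coroot_in_coroot_lattice:
  assumes "finite \<Phi>" "\<alpha> \<in> \<Phi>"
  shows "coroot \<alpha> \<in> coroot_lattice \<Phi>"
proof -
  have "(\<Sum>\<beta>\<in>\<Phi>. of_int (if \<beta> = \<alpha> then 1 else 0) *\<^sub>R coroot \<beta>)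
      = (\<Sum>\<beta>\<in>\<Phi>. if \<beta> = \<alpha> then coroot \<beta> else 0)"
    by (rule sum.cong) auto
  also have "\<dots> = coroot \<alpha>"
    using assms by (simp add: sum.delta')
  finally show ?thesis
    unfolding coroot_lattice_def by (intro CollectI exI[of _ "\<lambda>\<beta>. if \<beta> = \<alpha> then 1 else 0"]) simp
qed

lemma zero_in_coroot_lattice: "0 \<in> coroot_lattice \<Phi>"
  unfolding coroot_lattice_def by (intro CollectI exI[of _ "\<lambda>_. 0"]) simp

lemma aff_conj_central:
  assumes "linear a" "linear b" "bij b" "b \<circ> a = a \<circ> b"
  shows "aff_mult (aff_mult (aff_inv (b, v)) (a, u)) (b, v) = (a, b u + v - a v)"
proof -
  have b_inv: "b (inv b y) = y" for y
    using assms(3) by (simp add: bij_is_surj surj_f_inv_f)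
  have ba: "b (a y) = a (b y)" for y
    using assms(4) by (metis comp_apply)
  have "b \<circ> a \<circ> inv b = a"
    by (rule ext) (simp add: ba b_inv)
  moreover have "b (a (- inv b v) + u) + v = b u + v - a v"
  proof -
    have "b (a (- inv b v)) = - a v"
      using assms(1,2) by (simp add: linear_neg ba b_inv)
    then show ?thesis
      using assms(2) by (simp add: linear_add)
  qed
  ultimately show ?thesis
    unfolding aff_mult_def aff_inv_def by (simp add: comp_assoc)
qed

lemma aff_conj_class_central_involution:
  assumes "0 \<notin> \<Phi>" "w0 \<in> weyl_group \<Phi>" "w0 \<circ> w0 = id"
    and "\<forall>w\<in>weyl_group \<Phi>. w \<circ> w0 = w0 \<circ> w" and "w0 u = - u"
    and "z \<in> aff_conj_class \<Phi> (w0, u)"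
  shows "\<exists>p. z = (w0, p) \<and> w0 p = - p"
proof -
  obtain b v where b: "b \<in> weyl_group \<Phi>"
    and z: "z = aff_mult (aff_mult (aff_inv (b, v)) (w0, u)) (b, v)"
    using assms(6) unfolding aff_conj_class_def affine_weyl_group_def by auto
  have lin: "linear w0" "linear b"
    using assms(2) b weyl_group_linear by blast+
  have "z = (w0, b u + v - w0 v)"
    using z aff_conj_central[OF lin] weyl_group_bij[OF assms(1) b] assms(4) b by simp
  moreover have "w0 (b u + v - w0 v) = - (b u + v - w0 v)"
  proof -
    have "w0 (b u) = - b u"
      using assms(4,5) b lin(2) by (metis comp_apply linear_neg)
    moreover have "w0 (w0 v) = v"
      using assms(3) by (metis comp_apply id_apply)
    ultimately show ?thesis
      using lin(1) by (simp add: linear_add linear_diff)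
  qed
  ultimately show ?thesis by blast
qed

lemma aff_commute_antifixed_eq:
  assumes "a u = - u" "a p = - p" "aff_mult (a, u) (a, p) = aff_mult (a, p) (a, u)"
  shows "p = u"
proof -
  have "- u + p = - p + u"
    using assms unfolding aff_mult_def by simp
  then have "(2::real) *\<^sub>R p = 2 *\<^sub>R u"
    unfolding scaleR_2 by (simp add: algebra_simps)
  then show ?thesis by simp
qed

lemma exists_coroot_not_fixed:
  assumes "linear w" "w \<noteq> id" "span \<Phi> = UNIV" "0 \<notin> \<Phi>"
  shows "\<exists>\<alpha>\<in>\<Phi>. w (coroot \<alpha>) \<noteq> coroot \<alpha>"
proof (rule ccontr)
  assume "\<not> ?thesis"
  then have "w \<alpha> = \<alpha>" if "\<alpha> \<in> \<Phi>" for \<alpha>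
    using that assms(1,4) by (force simp: coroot_def linear_scale)
  then have "w y = id y" for y
    using linear_eq_on_span[OF assms(1) linear_id, of \<Phi> y] assms(3) by auto
  then show False using assms(2) by blast
qed

lemma not_comm_graph_connected_if_isolated:
  assumes "x \<in> X" "y \<in> X" "x \<noteq> y" "\<And>z. \<not> comm_adj mul X x z"
  shows "\<not> comm_graph_connected mul X"
proof
  assume "comm_graph_connected mul X"
  then have "(comm_adj mul X)\<^sup>*\<^sup>* x y"
    using assms(1,2) unfolding comm_graph_connected_def by blast
  then show False
    using assms(3,4) by (metis converse_rtranclpE)
qed

theorem lemma2p6:
  fixes \<Phi> :: "'a::euclidean_space set"
    and w0 :: "'a \<Rightarrow> 'a" and u :: 'a
  assumes "root_system \<Phi>"
    and "w0 \<in> weyl_group \<Phi>" and "w0 \<noteq> id" and "w0 \<circ> w0 = id"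
    and "\<forall>w\<in>weyl_group \<Phi>. w \<circ> w0 = w0 \<circ> w"
    and "u \<in> coroot_lattice \<Phi>"
    and "aff_mult (w0, u) (w0, u) = aff_one" and "(w0, u) \<noteq> aff_one"
  shows "\<not> comm_graph_connected aff_mult (aff_conj_class \<Phi> (w0, u))"
proof -
  let ?X = "aff_conj_class \<Phi> (w0, u)"
  have fin: "finite \<Phi>" and span: "span \<Phi> = UNIV" and nz: "0 \<notin> \<Phi>"
    using assms(1) unfolding root_system_def by auto
  have lin: "linear w0" using assms(2) weyl_group_linear by blast
  have w0_u: "w0 u = - u"
    using assms(7) unfolding aff_mult_def aff_one_def by (simp add: eq_neg_iff_add_eq_0)
  have conj_by_translation: "(w0, u + v - w0 v) \<in> ?X" if "v \<in> coroot_lattice \<Phi>" for v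
    using aff_conj_central[OF lin linear_id, of v u] that weyl_group.id
    unfolding aff_conj_class_def affine_weyl_group_def by force
  have isolated: "\<not> comm_adj aff_mult ?X (w0, u) z" for z
    using aff_conj_class_central_involution[OF nz assms(2,4,5) w0_u]
      aff_commute_antifixed_eq[of w0 u] unfolding comm_adj_def by blast
  have "(w0, u) \<in> ?X"
    using conj_by_translation[OF zero_in_coroot_lattice] lin by (simp add: linear_0)
  moreover obtain \<alpha> where "\<alpha> \<in> \<Phi>" and moved: "w0 (coroot \<alpha>) \<noteq> coroot \<alpha>"
    using exists_coroot_not_fixed[OF lin assms(3) span nz] by blast
  then have "(w0, u + coroot \<alpha> - w0 (coroot \<alpha>)) \<in> ?X"
    using conj_by_translation coroot_in_coroot_lattice[OF fin] by blast
  moreover have "(w0, u) \<noteq> (w0, u + coroot \<alpha> - w0 (coroot \<alpha>))"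
    using moved by simp
  ultimately show ?thesis
    using isolated by (rule not_comm_graph_connected_if_isolated)
qed

end
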